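(* Let $N\ge1$ and $\kappa,h,\nu,g\in\mathbb{C}$ with $h\neq0$. The matrix $K=K^{\mathrm{ra}}(\nu,g)$ satisfies $K^2=I$ and the constant reflection equation $\check R_{12}K_2\check R_{12}K_2=K_2\check R_{12}K_2\check R_{12}$, where $\check R=R^{\mathrm{ra}}(\kappa,h)P$.
   Context: $V=\mathbb{C}^N$ with basis $e_0,\dots,e_{N-1}$; $Ae_j=\sum_ke_k[A]_j^k$; $R(e_i\otimes e_j)=\sum_{k,l}[R]_{ij}^{kl}e_k\otimes e_l$; $P$ flip; $K_2=I\otimes K$. Binomial convention: $\binom{a}{b}=0$ unless $0\le b\le a$; $0^0=1$. $\epsilon(i,m,k)=1$ if $i\le k<m$, $-1$ if $m\le k<i$, $0$ otherwise. $$[R^{\mathrm{ra}}(\kappa,h)]_{ij}^{kl}=(-1)^{j-l}h^{i+j-k-l}\Big\{\binom{i}{k}\binom{j}{l}-\frac{\kappa}{h}\sum_m(-1)^{m-k}\binom{i}{m}\binom{j+m-k-1}{l}\epsilon(j,m,k)\Big\},$$ $$[K^{\mathrm{ra}}(\nu,g)]_j^k=(-1)^j\binom{j}{k}g^{j-k}+2\nu\sum_{0\le l<j}(-1)^{j-l}\binom{j-l-1}{k-l}g^{j-k-1}.$$ *)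

theory Defs
  imports Complex_Main
begin

text \<open>Matrices/operators are functions from (input index, output index) to coefficients:
  A e_j = sum_k e_k A j k. Indices of V = C^N are naturals < N; indices of V (x) V are pairs.\<close>

definition bin :: "int \<Rightarrow> int \<Rightarrow> complex" where
  "bin a b = (if 0 \<le> b \<and> b \<le> a then of_nat (nat a choose nat b) else 0)"

definition eps :: "int \<Rightarrow> int \<Rightarrow> int \<Rightarrow> complex" where
  "eps i m k = (if i \<le> k \<and> k < m then 1 else if m \<le> k \<and> k < i then -1 else 0)"

text \<open>R^ra(kappa,h): coefficient of e_k (x) e_l in R(e_i (x) e_j). The sum over m is
  restricted to 0..i, outside of which binom i m vanishes.\<close>
definition Rra :: "complex \<Rightarrow> complex \<Rightarrow> nat \<times> nat \<Rightarrow> nat \<times> nat \<Rightarrow> complex" where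
  "Rra \<kappa> h ij kl = (case ij of (i0, j0) \<Rightarrow> case kl of (k0, l0) \<Rightarrow>
     let i = int i0; j = int j0; k = int k0; l = int l0 in
     (-1) powi (j - l) * h powi (i + j - k - l) *
     (bin i k * bin j l - \<kappa> / h *
        (\<Sum>m\<in>{0..i}. (-1) powi (m - k) * bin i m * bin (j + m - k - 1) l * eps j m k)))"

definition Kra :: "complex \<Rightarrow> complex \<Rightarrow> nat \<Rightarrow> nat \<Rightarrow> complex" where
  "Kra \<nu> g j0 k0 = (let j = int j0; k = int k0 in
     (-1) powi j * bin j k * g powi (j - k) +
     2 * \<nu> * (\<Sum>l\<in>{0..<j}. (-1) powi (j - l) * bin (j - l - 1) (k - l) * g powi (j - k - 1)))"

text \<open>Composition of operators on a finite basis index set S: (A B) e_j = A (B e_j).\<close>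
definition mcomp :: "'i set \<Rightarrow> ('i \<Rightarrow> 'i \<Rightarrow> complex) \<Rightarrow> ('i \<Rightarrow> 'i \<Rightarrow> complex) \<Rightarrow> 'i \<Rightarrow> 'i \<Rightarrow> complex" where
  "mcomp S A B j m = (\<Sum>k\<in>S. B j k * A k m)"

definition idm :: "'i \<Rightarrow> 'i \<Rightarrow> complex" where
  "idm j k = (if j = k then 1 else 0)"

definition flip :: "nat \<times> nat \<Rightarrow> nat \<times> nat \<Rightarrow> complex" where
  "flip ij kl = (if kl = (snd ij, fst ij) then 1 else 0)"

definition K2 :: "(nat \<Rightarrow> nat \<Rightarrow> complex) \<Rightarrow> nat \<times> nat \<Rightarrow> nat \<times> nat \<Rightarrow> complex" where
  "K2 K ij kl = (if fst kl = fst ij then K (snd ij) (snd kl) else 0)"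

definition idx2 :: "nat \<Rightarrow> (nat \<times> nat) set" where
  "idx2 N = {0..<N} \<times> {0..<N}"

definition Rcheck :: "nat \<Rightarrow> complex \<Rightarrow> complex \<Rightarrow> nat \<times> nat \<Rightarrow> nat \<times> nat \<Rightarrow> complex" where
  "Rcheck N \<kappa> h = mcomp (idx2 N) (Rra \<kappa> h) flip"

end

theory Submission
  imports Defs "HOL-Computational_Algebra.Polynomial"
begin

text \<open>Encode the row \<open>a\<close> of an operator \<open>M\<close> on \<open>V \<otimes> V\<close> as the polynomial
  \<open>\<Sum>c. M a c x^c\<^sub>1 y^c\<^sub>2\<close>.  Binomial and geometric summation show that, in the coordinates
  \<open>X = x + h + g/2\<close>, \<open>Y = y + g/2\<close>, the matrix \<open>Rcheck\<close> acts on these polynomials as the difference operator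
  \<open>f \<mapsto> f(Y,X) + \<kappa> (f(Y,X) - f(X,Y))/(X - Y)\<close> and \<open>K\<close> on the second factor as
  \<open>f \<mapsto> f(X,-Y) + \<nu> (f(X,-Y) - f(X,Y))/Y\<close>, a swap and a sign change deformed in the manner of
  Demazure and Lusztig.  For these operators \<open>K\<^sup>2 = 1\<close> and the reflection equation are identities of
  rational functions, and they descend to the matrices because a polynomial vanishing off finitely
  many lines is zero.\<close>

section \<open>Difference operators of type B2\<close>

text \<open>Since division by zero yields zero, these operators carry meaning only off the lines
  \<open>Y = 0\<close> and \<open>X = Y\<close> respectively.\<close>

definition sign_op :: "'a::field \<Rightarrow> ('a \<Rightarrow> 'a) \<Rightarrow> 'a \<Rightarrow> 'a" where
  "sign_op \<nu> \<phi> Y = \<phi> (-Y) + \<nu> / Y * (\<phi> (-Y) - \<phi> Y)"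

definition swap_op :: "'a::field \<Rightarrow> ('a \<Rightarrow> 'a \<Rightarrow> 'a) \<Rightarrow> 'a \<Rightarrow> 'a \<Rightarrow> 'a" where
  "swap_op \<kappa> f X Y = f Y X + \<kappa> / (X - Y) * (f Y X - f X Y)"

lemma sign_op_involutive: "sign_op \<nu> (sign_op \<nu> \<phi>) Y = \<phi> Y"
proof -
  define s where "s = \<nu> / Y"
  have "\<nu> / - Y = - s" by (simp add: s_def)
  then show ?thesis unfolding sign_op_def minus_minus s_def[symmetric] by algebra
qed

lemma reflection_equation_ops:
  assumes "X \<noteq> 0" "Y \<noteq> 0" "X \<noteq> Y" "X \<noteq> - Y"
  shows "swap_op \<kappa> (\<lambda>X. sign_op \<nu> (swap_op \<kappa> (\<lambda>X. sign_op \<nu> (f X)) X)) X Y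
    = sign_op \<nu> (swap_op \<kappa> (\<lambda>X. sign_op \<nu> (swap_op \<kappa> f X)) X) Y"
proof -
  define p q r s where "p = \<kappa> / (X - Y)" and "q = \<kappa> / (X + Y)" and "r = \<nu> / X" and "s = \<nu> / Y"
  have quotients: "\<kappa> / (X - Y) = p" "\<kappa> / (Y - X) = - p" "\<kappa> / (- X - - Y) = - p" "\<kappa> / (- Y - - X) = p"
    "\<kappa> / (X - - Y) = q" "\<kappa> / (Y - - X) = q" "\<kappa> / (- X - Y) = - q" "\<kappa> / (- Y - X) = - q"
    "\<nu> / X = r" "\<nu> / - X = - r" "\<nu> / Y = s" "\<nu> / - Y = - s"
    unfolding p_def q_def r_def s_def
    by (simp_all add: add.commute)
      (metis divide_minus_right minus_diff_eq minus_add_distrib diff_conv_add_uminus add.commute)+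
  \<comment> \<open>The four quotients are algebraically dependent; this one relation is all the identity needs.\<close>
  have "X - Y \<noteq> 0" "X + Y \<noteq> 0" using assms by (auto simp: add_eq_0_iff2)
  moreover have "s - r = \<nu> * (X - Y) / (X * Y)" "s + r = \<nu> * (X + Y) / (X * Y)"
    using assms by (simp_all add: r_def s_def field_simps)
  ultimately have relation: "p * (s - r) = q * (s + r)"
    by (simp add: p_def q_def)
  show ?thesis unfolding swap_op_def sign_op_def minus_minus quotients using relation by algebra
qed

lemma sign_op_sum:
  "sign_op \<nu> (\<lambda>Y. \<Sum>m\<in>S. c m * \<phi> m Y) Y = (\<Sum>m\<in>S. c m * sign_op \<nu> (\<phi> m) Y)"
  unfolding sign_op_def
  by (simp add: ring_distribs sum.distrib sum_subtractf sum_distrib_left mult.left_commute)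

lemma swap_op_sum:
  "swap_op \<kappa> (\<lambda>X Y. \<Sum>m\<in>S. c m * f m X Y) X Y = (\<Sum>m\<in>S. c m * swap_op \<kappa> (f m) X Y)"
  unfolding swap_op_def
  by (simp add: ring_distribs sum.distrib sum_subtractf sum_distrib_left mult.left_commute)

lemma sign_op_cong: "\<phi> Y = \<psi> Y \<Longrightarrow> \<phi> (- Y) = \<psi> (- Y) \<Longrightarrow> sign_op \<nu> \<phi> Y = sign_op \<nu> \<psi> Y"
  by (simp add: sign_op_def)

lemma swap_op_cong: "f X Y = f' X Y \<Longrightarrow> f Y X = f' Y X \<Longrightarrow> swap_op \<kappa> f X Y = swap_op \<kappa> f' X Y"
  by (simp add: swap_op_def)

section \<open>Polynomials vanishing generically\<close>

lemma coeff_eq_zero_if_poly_vanishes_cofinitely: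
  fixes c :: "nat \<Rightarrow> 'a::{idom, ring_char_0}"
  assumes "finite E" and "\<And>x. x \<notin> E \<Longrightarrow> (\<Sum>k<N. c k * (x - u)^k) = 0" and "k < N"
  shows "c k = 0"
proof -
  define p where "p = (\<Sum>k<N. monom (c k) k)"
  have poly_p: "poly p (x - u) = (\<Sum>k<N. c k * (x - u)^k)" for x
    by (simp add: p_def poly_sum poly_monom)
  have "p = 0"
  proof (rule ccontr)
    assume "p \<noteq> 0"
    then have "finite ((\<lambda>z. z + u) ` {z. poly p z = 0})" by (simp add: poly_roots_finite)
    moreover have "- E \<subseteq> (\<lambda>z. z + u) ` {z. poly p z = 0}"
    proof
      fix x assume "x \<in> - E"
      then have "poly p (x - u) = 0" using assms(2) poly_p by simp
      then show "x \<in> (\<lambda>z. z + u) ` {z. poly p z = 0}" by (auto intro: image_eqI[of _ _ "x - u"])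
    qed
    moreover have "infinite (- E)"
      using assms(1) by (simp add: Compl_eq_Diff_UNIV infinite_UNIV_char_0)
    ultimately show False using finite_subset by blast
  qed
  then have "coeff p k = 0" by simp
  moreover have "coeff p k = c k" using assms(3) by (simp add: p_def coeff_sum)
  ultimately show ?thesis by simp
qed

lemma coeff2_eq_zero_if_poly_vanishes_generically:
  fixes c :: "nat \<Rightarrow> nat \<Rightarrow> 'a::{idom, ring_char_0}"
  assumes "finite B" and "\<And>y. y \<notin> B \<Longrightarrow> finite (A y)"
    and "\<And>x y. y \<notin> B \<Longrightarrow> x \<notin> A y \<Longrightarrow> (\<Sum>k<N. \<Sum>l<N. c k l * (x - u)^k * (y - w)^l) = 0"
    and "k < N" and "l < N"
  shows "c k l = 0"
proof -
  have "(\<Sum>l<N. c k l * (y - w)^l) = 0" if "y \<notin> B" for y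
  proof (rule coeff_eq_zero_if_poly_vanishes_cofinitely[OF assms(2)[OF that] _ assms(4)])
    fix x assume "x \<notin> A y"
    have "(\<Sum>k<N. (\<Sum>l<N. c k l * (y - w)^l) * (x - u)^k)
        = (\<Sum>k<N. \<Sum>l<N. c k l * (x - u)^k * (y - w)^l)"
      by (simp add: sum_distrib_left sum_distrib_right mult_ac)
    then show "(\<Sum>k<N. (\<Sum>l<N. c k l * (y - w)^l) * (x - u)^k) = 0"
      using assms(3)[OF that \<open>x \<notin> A y\<close>] by simp
  qed
  then show ?thesis by (rule coeff_eq_zero_if_poly_vanishes_cofinitely[OF assms(1) _ assms(5)])
qed

lemma sum_lessThan_eq_atMost:
  fixes j N :: nat
  assumes "j < N" and "\<And>k. j < k \<Longrightarrow> f k = 0"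
  shows "(\<Sum>k<N. f k) = (\<Sum>k\<le>j. f k)"
proof (rule sum.mono_neutral_right)
  show "\<forall>k\<in>{..<N} - {..j}. f k = 0"
  proof
    fix k assume "k \<in> {..<N} - {..j}"
    then show "f k = 0" by (intro assms(2)) auto
  qed
qed (use assms(1) in auto)

lemma sum_binomial_lessThan:
  fixes a b :: "'a::comm_ring_1"
  assumes "n < N"
  shows "(\<Sum>k<N. of_nat (n choose k) * a^k * b^(n-k)) = (a + b)^n"
proof -
  have "(\<Sum>k<N. of_nat (n choose k) * a^k * b^(n-k)) = (\<Sum>k\<le>n. of_nat (n choose k) * a^k * b^(n-k))"
    by (rule sum_lessThan_eq_atMost) (use assms in \<open>simp_all add: binomial_eq_0\<close>)
  then show ?thesis by (simp add: binomial_ring)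
qed

lemma sum_binomial_window:
  fixes y g :: "'a::comm_ring_1"
  assumes "l < j" and "j \<le> N"
  shows "(\<Sum>k<N. (if l \<le> k \<and> k < j then of_nat ((j-l-1) choose (k-l)) * g^(j-k-1) else 0) * y^k)
    = y^l * (y + g)^(j-l-1)"
proof -
  have "(\<Sum>k<N. (if l \<le> k \<and> k < j then of_nat ((j-l-1) choose (k-l)) * g^(j-k-1) else 0) * y^k)
      = (\<Sum>k\<in>{l..<j}. of_nat ((j-l-1) choose (k-l)) * g^(j-k-1) * y^k)"
    by (rule sum.mono_neutral_cong_right) (use assms in auto)
  also have "\<dots> = (\<Sum>t\<in>{0..<j-l}. of_nat ((j-l-1) choose t) * g^(j-l-1-t) * y^(t+l))"
  proof -
    have "{l..<j} = {0+l..<(j-l)+l}" using assms(1) by simp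
    then have "(\<Sum>k\<in>{l..<j}. of_nat ((j-l-1) choose (k-l)) * g^(j-k-1) * y^k)
        = (\<Sum>t\<in>{0..<j-l}. of_nat ((j-l-1) choose (t+l-l)) * g^(j-(t+l)-1) * y^(t+l))"
      by (simp only: sum.shift_bounds_nat_ivl)
    then show ?thesis by (simp add: algebra_simps)
  qed
  also have "\<dots> = (\<Sum>t\<le>j-l-1. of_nat ((j-l-1) choose t) * g^(j-l-1-t) * y^(t+l))"
  proof -
    have "{0..<j-l} = {..j-l-1}" using assms(1) by auto
    then show ?thesis by simp
  qed
  also have "\<dots> = y^l * (\<Sum>t\<le>j-l-1. of_nat ((j-l-1) choose t) * y^t * g^(j-l-1-t))"
    by (simp add: sum_distrib_left power_add mult_ac)
  also have "\<dots> = y^l * (y + g)^(j-l-1)" by (simp add: binomial_ring)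
  finally show ?thesis .
qed

lemma minus_one_power_Suc_times: "(-1) ^ Suc n * (- z) ^ n = - (z ^ n :: 'a::comm_ring_1)"
  by (simp flip: power_mult_distrib)

lemma sum_atLeastLessThan_geometric:
  fixes x v :: "'a::field"
  assumes "j \<le> m" and "x \<noteq> v"
  shows "(\<Sum>k\<in>{j..<m}. x^k * v^(j+m-k-1)) = (x^m * v^j - x^j * v^m) / (x - v)"
proof -
  define d where "d = m - j"
  have "{j..<m} = {0+j..<d+j}" by (simp add: d_def assms(1))
  then have "(\<Sum>k\<in>{j..<m}. x^k * v^(j+m-k-1)) = (\<Sum>t\<in>{0..<d}. x^(t+j) * v^(j+m-(t+j)-1))"
    by (simp only: sum.shift_bounds_nat_ivl)
  also have "\<dots> = x^j * v^j * (\<Sum>t<d. v^(d - Suc t) * x^t)"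
  proof -
    have "x^(t+j) * v^(j+m-(t+j)-1) = x^j * v^j * (v^(d - Suc t) * x^t)" if "t < d" for t
    proof -
      have "j+m-(t+j)-1 = j + (d - Suc t)" using that assms(1) by (auto simp: d_def)
      then show ?thesis by (simp add: power_add mult_ac)
    qed
    then show ?thesis by (simp add: sum_distrib_left atLeast0LessThan)
  qed
  also have "\<dots> = x^j * v^j * ((x^d - v^d) / (x - v))"
    using power_diff_sumr2[of x d v] assms(2) by simp
  also have "\<dots> = (x^m * v^j - x^j * v^m) / (x - v)"
  proof -
    have "m = j + d" using assms(1) by (simp add: d_def)
    then show ?thesis by (simp add: power_add algebra_simps diff_divide_distrib)
  qed
  finally show ?thesis .
qed

lemma bin_of_nat [simp]: "bin (int a) (int b) = of_nat (a choose b)"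
  by (simp add: bin_def)

lemma sum_int_atLeastLessThan: "(\<Sum>l\<in>{0..<int n}. f l) = (\<Sum>l<n. f (int l))"
proof -
  have "{0..<int n} = int ` {..<n}" by (simp add: image_int_atLeastLessThan lessThan_atLeast0)
  then show ?thesis by (simp add: sum.reindex)
qed

lemma sum_int_atLeastAtMost: "(\<Sum>l\<in>{0..int n}. f l) = (\<Sum>l\<le>n. f (int l))"
proof -
  have "{0..int n} = int ` {..n}" by (simp add: image_int_atLeastAtMost atMost_atLeast0)
  then show ?thesis by (simp add: sum.reindex)
qed

lemma power_int_diff_of_nat: "k \<le> j \<Longrightarrow> x powi (int j - int k) = x ^ (j - k)"
  by (simp only: of_nat_diff[symmetric] power_int_of_nat)

lemma Kra_eq:
  "Kra \<nu> g j k = (-1)^j * of_nat (j choose k) * g^(j-k)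
     + 2 * \<nu> * (\<Sum>l<j. (-1)^(j-l) *
         (if l \<le> k \<and> k < j then of_nat ((j-l-1) choose (k-l)) * g^(j-k-1) else 0))"
proof -
  have leading: "(-1) powi int j * bin (int j) (int k) * g powi (int j - int k)
      = (-1)^j * of_nat (j choose k) * g^(j-k)"
    by (cases "k \<le> j") (simp_all add: power_int_diff_of_nat binomial_eq_0)
  have tail: "(-1) powi (int j - int l) * bin (int j - int l - 1) (int k - int l) * g powi (int j - int k - 1)
      = (-1)^(j-l) * (if l \<le> k \<and> k < j then of_nat ((j-l-1) choose (k-l)) * g^(j-k-1) else 0)"
    if "l < j" for l
  proof (cases "l \<le> k")
    case True
    have "int j - int l - 1 = int (j-l-1)" "int k - int l = int (k-l)" using that True by auto
    then have "bin (int j - int l - 1) (int k - int l) = of_nat ((j-l-1) choose (k-l))"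
      by (simp only: bin_of_nat)
    moreover have "g powi (int j - int k - 1) = g^(j-k-1)" if "k < j"
      using that power_int_diff_of_nat[of "Suc k" j g] by (simp add: algebra_simps)
    ultimately show ?thesis
      using True that by (auto simp: power_int_diff_of_nat binomial_eq_0)
  qed (simp add: bin_def)
  show ?thesis
    unfolding Kra_def Let_def sum_int_atLeastLessThan leading
    by (simp add: tail)
qed

definition eps_nat :: "nat \<Rightarrow> nat \<Rightarrow> nat \<Rightarrow> complex" where
  "eps_nat j m k = (if j \<le> k \<and> k < m then 1 else if m \<le> k \<and> k < j then -1 else 0)"

lemma eps_of_nat [simp]: "eps (int j) (int m) (int k) = eps_nat j m k"
  by (simp add: eps_def eps_nat_def)

lemma Rra_leading_term:
  "(-1) powi (int j - int l) * h powi (int i + int j - int k - int l) * (bin (int i) (int k) * bin (int j) (int l))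
    = of_nat (i choose k) * of_nat (j choose l) * h^(i-k) * (-h)^(j-l)"
proof (cases "k \<le> i \<and> l \<le> j")
  case True
  then have "int j - int l = int (j-l)" "int i + int j - int k - int l = int ((i-k)+(j-l))" by auto
  then have "(-1) powi (int j - int l) * h powi (int i + int j - int k - int l) = (-1)^(j-l) * h^((i-k)+(j-l))"
    by (simp only: power_int_of_nat)
  then show ?thesis unfolding power_add power_minus[of h] using True by simp
qed (auto simp: binomial_eq_0)

lemma Rra_correction_term:
  assumes "h \<noteq> 0"
  shows "(-1) powi (int j - int l) * h powi (int i + int j - int k - int l)
      * (\<kappa> / h * ((-1) powi (int m - int k) * bin (int i) (int m)
        * bin (int j + int m - int k - 1) (int l) * eps (int j) (int m) (int k)))
    = - \<kappa> * (eps_nat j m k * of_nat (i choose m) * h^(i-m)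
        * (of_nat ((j+m-k-1) choose l) * (-h)^(j+m-k-1-l)))"
  (is "?lhs = _")
proof (cases "eps_nat j m k \<noteq> 0 \<and> m \<le> i \<and> l \<le> j+m-k-1")
  case True
  define n where "n = j + m - k - 1"
  have km: "k < j \<or> k < m" using True by (auto simp: eps_nat_def split: if_splits)
  then have n: "int j + int m - int k - 1 = int n" by (auto simp: n_def)
  have sign: "(-1::complex) powi (int j - int l) * (-1) powi (int m - int k) = - ((-1)^(n-l))"
  proof -
    have e: "(int j - int l) + (int m - int k) = int (Suc (n - l))" using True km by (auto simp: n_def)
    have "(-1::complex) powi (int j - int l) * (-1) powi (int m - int k)
        = (-1) powi ((int j - int l) + (int m - int k))" by (simp add: power_int_add)
    also have "\<dots> = (-1)^(Suc (n - l))" by (simp only: e power_int_of_nat)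
    finally show ?thesis by simp
  qed
  have "h powi (int i + int j - int k - int l) = h^(n-l) * h^(i-m) * h"
  proof -
    have "int i + int j - int k - int l = int ((n-l)+(i-m)) + 1" using True km by (auto simp: n_def)
    then show ?thesis using assms by (simp add: power_int_add power_add)
  qed
  then have "?lhs = \<kappa> * ((-1) powi (int j - int l) * (-1) powi (int m - int k)) * (h^(n-l) * h^(i-m))
        * of_nat (i choose m) * of_nat (n choose l) * eps_nat j m k"
    using assms by (simp add: n)
  also have "\<dots> = - \<kappa> * (eps_nat j m k * of_nat (i choose m) * h^(i-m) * (of_nat (n choose l) * (-h)^(n-l)))"
    by (simp only: sign power_minus[of h] mult_ac mult_minus_left mult_minus_right)
  finally show ?thesis by (simp add: n_def)
next
  case False
  then consider "eps_nat j m k = 0" | "i < m" | "j+m-k-1 < l" by linarith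
  then show ?thesis
  proof cases
    case 3
    then have "bin (int j + int m - int k - 1) (int l) = 0" by (simp add: bin_def)
    then show ?thesis using 3 by (simp add: binomial_eq_0)
  qed (simp_all add: binomial_eq_0)
qed

lemma Rra_eq:
  assumes "h \<noteq> 0"
  shows "Rra \<kappa> h (i,j) (k,l) =
      of_nat (i choose k) * of_nat (j choose l) * h^(i-k) * (-h)^(j-l)
    + \<kappa> * (\<Sum>m\<le>i. eps_nat j m k * of_nat (i choose m) * h^(i-m)
                  * (of_nat ((j+m-k-1) choose l) * (-h)^(j+m-k-1-l)))"
proof -
  define P where "P = (-1) powi (int j - int l) * h powi (int i + int j - int k - int l)"
  define T where "T m = (-1) powi (m - int k) * bin (int i) m * bin (int j + m - int k - 1) (int l)
      * eps (int j) m (int k)" for m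
  have "Rra \<kappa> h (i,j) (k,l) = P * (bin (int i) (int k) * bin (int j) (int l) - \<kappa> / h * (\<Sum>m\<le>i. T (int m)))"
    unfolding Rra_def Let_def P_def T_def prod.case sum_int_atLeastAtMost ..
  also have "\<dots> = P * (bin (int i) (int k) * bin (int j) (int l)) - (\<Sum>m\<le>i. P * (\<kappa> / h * T (int m)))"
    by (simp only: right_diff_distrib sum_distrib_left)
  finally show ?thesis
    unfolding P_def T_def Rra_leading_term Rra_correction_term[OF assms] by (simp add: sum_negf sum_distrib_left)
qed

section \<open>Generating functions of rows\<close>

lemma sum_Kra_tail:
  fixes y g :: "'a::comm_ring_1"
  assumes "j \<le> N"
  shows "(\<Sum>k<N. (\<Sum>l<j. (-1)^(j-l)
      * (if l \<le> k \<and> k < j then of_nat ((j-l-1) choose (k-l)) * g^(j-k-1) else 0)) * y^k)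
    = - (\<Sum>l<j. (- y - g)^(j - Suc l) * y^l)"
proof -
  define W where "W l k = (if l \<le> k \<and> k < j then of_nat ((j-l-1) choose (k-l)) * g^(j-k-1) else 0)"
    for l k
  have "(\<Sum>k<N. (\<Sum>l<j. (-1)^(j-l) * W l k) * y^k) = (\<Sum>k<N. \<Sum>l<j. (-1)^(j-l) * (W l k * y^k))"
    by (simp add: sum_distrib_right mult.assoc)
  also have "\<dots> = (\<Sum>l<j. \<Sum>k<N. (-1)^(j-l) * (W l k * y^k))" by (rule sum.swap)
  also have "\<dots> = (\<Sum>l<j. (-1)^(j-l) * (\<Sum>k<N. W l k * y^k))" by (simp add: sum_distrib_left)
  also have "\<dots> = (\<Sum>l<j. (-1)^(j-l) * (y^l * (- (- y - g))^(j-l-1)))"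
    using assms by (simp add: W_def sum_binomial_window add.commute)
  also have "\<dots> = (\<Sum>l<j. - ((- y - g)^(j - Suc l) * y^l))"
  proof (rule sum.cong)
    fix l assume "l \<in> {..<j}"
    then have "j - l = Suc (j - Suc l)" by auto
    then show "(-1)^(j-l) * (y^l * (- (- y - g))^(j-l-1)) = - ((- y - g)^(j - Suc l) * y^l)"
      using minus_one_power_Suc_times[of "j - Suc l" "- y - g"] by (simp add: mult.left_commute)
  qed simp
  finally show ?thesis by (simp add: W_def sum_negf)
qed

lemma Kra_row_poly:
  fixes \<nu> g Y :: complex
  assumes "j < N" and "Y \<noteq> 0"
  shows "(\<Sum>k<N. Kra \<nu> g j k * (Y - g/2)^k) = sign_op \<nu> (\<lambda>Y. (Y - g/2)^j) Y"
proof -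
  define y z where "y = Y - g/2" and "z = - Y - g/2"
  have "z = - y - g" by (simp add: y_def z_def)
  have binomial: "(\<Sum>k<N. (-1)^j * of_nat (j choose k) * g^(j-k) * y^k) = z^j"
  proof -
    have "(\<Sum>k<N. (-1)^j * of_nat (j choose k) * g^(j-k) * y^k)
        = (-1)^j * (\<Sum>k<N. of_nat (j choose k) * y^k * g^(j-k))"
      by (simp add: sum_distrib_left mult_ac)
    also have "\<dots> = (-1)^j * (- z)^j"
      by (simp only: sum_binomial_lessThan[OF assms(1)] \<open>z = - y - g\<close>) (simp add: add.commute)
    finally show ?thesis by (simp flip: power_mult_distrib)
  qed
  have "y^j - z^j = (y - z) * (\<Sum>l<j. z^(j - Suc l) * y^l)" by (rule power_diff_sumr2)
  moreover have "y - z = 2 * Y" by (simp add: y_def z_def)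
  ultimately have geometric: "(\<Sum>l<j. z^(j - Suc l) * y^l) = (y^j - z^j) / (2 * Y)"
    using assms(2) by simp
  have "Kra \<nu> g j k * y^k = (-1)^j * of_nat (j choose k) * g^(j-k) * y^k
      + 2 * \<nu> * ((\<Sum>l<j. (-1)^(j-l)
          * (if l \<le> k \<and> k < j then of_nat ((j-l-1) choose (k-l)) * g^(j-k-1) else 0)) * y^k)" for k
    unfolding Kra_eq by (simp only: distrib_right mult.assoc)
  then have "(\<Sum>k<N. Kra \<nu> g j k * y^k) = (\<Sum>k<N. (-1)^j * of_nat (j choose k) * g^(j-k) * y^k)
      + 2 * \<nu> * (\<Sum>k<N. (\<Sum>l<j. (-1)^(j-l)
          * (if l \<le> k \<and> k < j then of_nat ((j-l-1) choose (k-l)) * g^(j-k-1) else 0)) * y^k)"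
    by (simp only: sum.distrib sum_distrib_left)
  then have row: "(\<Sum>k<N. Kra \<nu> g j k * y^k) = z^j - 2 * \<nu> * ((y^j - z^j) / (2 * Y))"
    unfolding binomial sum_Kra_tail[OF less_imp_le[OF assms(1)]] \<open>z = - y - g\<close>[symmetric] geometric
    by simp
  have sign: "sign_op \<nu> (\<lambda>Y. (Y - g/2)^j) Y = z^j + \<nu> / Y * (z^j - y^j)"
    by (simp add: sign_op_def y_def z_def)
  show ?thesis
    unfolding sign y_def[symmetric] row using assms(2) by (simp add: field_simps)
qed

lemma sum_eps_nat_geometric:
  fixes x v :: complex
  assumes "j \<le> N" and "m \<le> N" and "x \<noteq> v"
  shows "(\<Sum>k<N. eps_nat j m k * (x^k * v^(j+m-k-1))) = (x^m * v^j - x^j * v^m) / (x - v)"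
proof (cases "j \<le> m")
  case True
  have "(\<Sum>k<N. eps_nat j m k * (x^k * v^(j+m-k-1))) = (\<Sum>k\<in>{j..<m}. x^k * v^(j+m-k-1))"
    by (rule sum.mono_neutral_cong_right) (use assms True in \<open>auto simp: eps_nat_def\<close>)
  then show ?thesis using sum_atLeastLessThan_geometric[OF True assms(3)] by simp
next
  case False
  have "(\<Sum>k<N. eps_nat j m k * (x^k * v^(j+m-k-1))) = - (\<Sum>k\<in>{m..<j}. x^k * v^(m+j-k-1))"
    unfolding sum_negf[symmetric]
    by (rule sum.mono_neutral_cong_right) (use assms False in \<open>auto simp: eps_nat_def add.commute\<close>)
  moreover have "m \<le> j" using False by simp
  ultimately show ?thesis using sum_atLeastLessThan_geometric[of m j x v] assms(3)
    by (simp add: add.commute minus_divide_left)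
qed

lemma eps_nat_times_binomial_sum:
  assumes "m \<le> i" and "i < N" and "j < N"
  shows "eps_nat j m k * (\<Sum>l<N. of_nat ((j+m-k-1) choose l) * y^l * b^(j+m-k-1-l))
    = eps_nat j m k * (y + b)^(j+m-k-1)"
proof (cases "eps_nat j m k = 0")
  case False
  then have "j+m-k-1 < N" using assms by (auto simp: eps_nat_def split: if_splits)
  then show ?thesis using sum_binomial_lessThan[of "j+m-k-1" N y b] by simp
qed simp

lemma sum_Rra_correction:
  fixes h x y :: complex
  assumes "i < N" and "j < N" and "x - y + h \<noteq> 0"
  shows "(\<Sum>k<N. \<Sum>l<N. \<Sum>m\<le>i. of_nat (i choose m) * h^(i-m) * eps_nat j m k * x^k
      * (of_nat ((j+m-k-1) choose l) * y^l * (-h)^(j+m-k-1-l)))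
    = ((x + h)^i * (y - h)^j - x^j * y^i) / (x - y + h)"
proof -
  define v where "v = y - h"
  define n where "n m k = j + m - k - 1" for m k
  define B where "B m k l = of_nat (n m k choose l) * y^l * (-h)^(n m k - l)" for m k l
  define E where "E m k = of_nat (i choose m) * h^(i-m) * eps_nat j m k" for m k
  have "(\<Sum>k<N. \<Sum>l<N. \<Sum>m\<le>i. of_nat (i choose m) * h^(i-m) * eps_nat j m k * x^k
      * (of_nat ((j+m-k-1) choose l) * y^l * (-h)^(j+m-k-1-l)))
    = (\<Sum>k<N. \<Sum>l<N. \<Sum>m\<le>i. E m k * x^k * B m k l)"
    unfolding E_def B_def n_def ..
  also have "\<dots>
      = (\<Sum>m\<le>i. of_nat (i choose m) * h^(i-m) * (\<Sum>k<N. eps_nat j m k * (x^k * v^(n m k))))"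
  proof -
    have "(\<Sum>l<N. E m k * x^k * B m k l) = of_nat (i choose m) * h^(i-m) * (eps_nat j m k * (x^k * v^(n m k)))"
      if "m \<le> i" for m k
    proof -
      have "(\<Sum>l<N. E m k * x^k * B m k l) = of_nat (i choose m) * h^(i-m) * x^k
          * (eps_nat j m k * (\<Sum>l<N. of_nat (n m k choose l) * y^l * (-h)^(n m k - l)))"
        unfolding E_def B_def sum_distrib_left by (simp add: mult_ac)
      also have "\<dots> = of_nat (i choose m) * h^(i-m) * x^k * (eps_nat j m k * v^(n m k))"
        unfolding eps_nat_times_binomial_sum[OF that assms(1,2), of k y "-h", folded n_def] v_def
        by simp
      finally show ?thesis by (simp add: mult_ac)
    qed
    then have "(\<Sum>k<N. \<Sum>l<N. \<Sum>m\<le>i. E m k * x^k * B m k l)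
        = (\<Sum>k<N. \<Sum>m\<le>i. of_nat (i choose m) * h^(i-m) * (eps_nat j m k * (x^k * v^(n m k))))"
      by (intro sum.cong[OF refl], subst sum.swap, intro sum.cong[OF refl]) simp
    also have "\<dots> = (\<Sum>m\<le>i. of_nat (i choose m) * h^(i-m) * (\<Sum>k<N. eps_nat j m k * (x^k * v^(n m k))))"
      by (subst sum.swap) (simp only: sum_distrib_left)
    finally show ?thesis .
  qed
  also have "\<dots> = (\<Sum>m\<le>i. of_nat (i choose m) * h^(i-m) * ((x^m * v^j - x^j * v^m) / (x - v)))"
  proof (rule sum.cong)
    fix m assume "m \<in> {..i}"
    then have "m \<le> N" using assms(1) by simp
    moreover have "x \<noteq> v" using assms(3) by (auto simp: v_def)
    ultimately show "of_nat (i choose m) * h^(i-m) * (\<Sum>k<N. eps_nat j m k * (x^k * v^(n m k)))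
        = of_nat (i choose m) * h^(i-m) * ((x^m * v^j - x^j * v^m) / (x - v))"
      using sum_eps_nat_geometric[of j N m x v] assms(2) by (simp add: n_def)
  qed simp
  also have "\<dots> = ((\<Sum>m\<le>i. of_nat (i choose m) * x^m * h^(i-m)) * v^j
      - x^j * (\<Sum>m\<le>i. of_nat (i choose m) * v^m * h^(i-m))) / (x - v)"
    by (simp add: sum_divide_distrib sum_distrib_left sum_distrib_right sum_subtractf
        diff_divide_distrib algebra_simps)
  also have "\<dots> = ((x + h)^i * v^j - x^j * (v + h)^i) / (x - v)"
    by (simp only: binomial_ring)
  also have "\<dots> = ((x + h)^i * v^j - x^j * y^i) / (x - y + h)"
    by (simp add: v_def algebra_simps)
  finally show ?thesis by (simp add: v_def)
qed

lemma Rra_row_poly: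
  fixes \<kappa> h x y :: complex
  assumes "i < N" and "j < N" and "h \<noteq> 0" and "x - y + h \<noteq> 0"
  shows "(\<Sum>k<N. \<Sum>l<N. Rra \<kappa> h (i,j) (k,l) * x^k * y^l)
    = (x+h)^i * (y-h)^j + \<kappa> / (x - y + h) * ((x+h)^i * (y-h)^j - y^i * x^j)"
proof -
  have "Rra \<kappa> h (i,j) (k,l) * x^k * y^l
      = (of_nat (i choose k) * x^k * h^(i-k)) * (of_nat (j choose l) * y^l * (-h)^(j-l))
        + \<kappa> * (\<Sum>m\<le>i. of_nat (i choose m) * h^(i-m) * eps_nat j m k * x^k
            * (of_nat ((j+m-k-1) choose l) * y^l * (-h)^(j+m-k-1-l)))" for k l
    unfolding Rra_eq[OF assms(3)] by (simp add: ring_distribs sum_distrib_left sum_distrib_right mult_ac)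
  then have "(\<Sum>k<N. \<Sum>l<N. Rra \<kappa> h (i,j) (k,l) * x^k * y^l)
      = (\<Sum>k<N. \<Sum>l<N. (of_nat (i choose k) * x^k * h^(i-k)) * (of_nat (j choose l) * y^l * (-h)^(j-l)))
        + \<kappa> * (\<Sum>k<N. \<Sum>l<N. \<Sum>m\<le>i. of_nat (i choose m) * h^(i-m) * eps_nat j m k * x^k
            * (of_nat ((j+m-k-1) choose l) * y^l * (-h)^(j+m-k-1-l)))"
    by (simp only: sum.distrib sum_distrib_left)
  also have "(\<Sum>k<N. \<Sum>l<N. (of_nat (i choose k) * x^k * h^(i-k)) * (of_nat (j choose l) * y^l * (-h)^(j-l)))
      = (x + h)^i * (y - h)^j"
    unfolding sum_product[symmetric] using assms(1,2) by (simp add: sum_binomial_lessThan)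
  also note sum_Rra_correction[OF assms(1,2,4)]
  finally show ?thesis by (simp add: right_diff_distrib diff_divide_distrib mult_ac)
qed

section \<open>Matrices as difference operators\<close>

text \<open>The shift by \<open>h + g/2\<close> and \<open>g/2\<close> is what turns \<open>Rcheck\<close> into \<open>swap_op \<kappa>\<close> and \<open>K\<close> into
  \<open>sign_op \<nu>\<close> in the second variable (\<open>row_poly_Rcheck\<close>, \<open>row_poly_K2\<close>).\<close>

definition basis_poly :: "complex \<Rightarrow> complex \<Rightarrow> nat \<times> nat \<Rightarrow> complex \<Rightarrow> complex \<Rightarrow> complex" where
  "basis_poly h g c X Y = (X - h - g/2) ^ fst c * (Y - g/2) ^ snd c"

definition row_poly ::
  "complex \<Rightarrow> complex \<Rightarrow> (nat \<times> nat) set \<Rightarrow> (nat \<times> nat \<Rightarrow> nat \<times> nat \<Rightarrow> complex)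
    \<Rightarrow> nat \<times> nat \<Rightarrow> complex \<Rightarrow> complex \<Rightarrow> complex" where
  "row_poly h g S M a X Y = (\<Sum>c\<in>S. M a c * basis_poly h g c X Y)"

lemma fin_idx2 [simp]: "finite (idx2 N)"
  by (simp add: idx2_def)

text \<open>Points off the reflecting lines of the group generated by \<open>(X, Y) \<mapsto> (Y, X)\<close> and
  \<open>(X, Y) \<mapsto> (X, -Y)\<close>.\<close>

definition regular_point :: "complex \<Rightarrow> complex \<Rightarrow> bool" where
  "regular_point X Y \<longleftrightarrow> X \<noteq> 0 \<and> Y \<noteq> 0 \<and> X \<noteq> Y \<and> X \<noteq> - Y"

lemma row_poly_mcomp:
  assumes "finite S"
  shows "row_poly h g S (mcomp S A B) a X Y = (\<Sum>m\<in>S. B a m * row_poly h g S A m X Y)"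
proof -
  have "row_poly h g S (mcomp S A B) a X Y = (\<Sum>c\<in>S. \<Sum>m\<in>S. B a m * A m c * basis_poly h g c X Y)"
    unfolding row_poly_def mcomp_def by (simp add: sum_distrib_right)
  also have "\<dots> = (\<Sum>m\<in>S. \<Sum>c\<in>S. B a m * A m c * basis_poly h g c X Y)" by (rule sum.swap)
  also have "\<dots> = (\<Sum>m\<in>S. B a m * row_poly h g S A m X Y)"
    unfolding row_poly_def by (simp add: sum_distrib_left mult.assoc)
  finally show ?thesis .
qed

lemma row_poly_idx2:
  "row_poly h g (idx2 N) M a X Y = (\<Sum>k<N. \<Sum>l<N. M a (k,l) * (X - h - g/2)^k * (Y - g/2)^l)"
  unfolding row_poly_def idx2_def basis_poly_def
  by (simp add: sum.cartesian_product atLeast0LessThan case_prod_beta mult.assoc)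

lemma Rcheck_eq:
  assumes "a \<in> idx2 N"
  shows "Rcheck N \<kappa> h a c = Rra \<kappa> h (snd a, fst a) c"
proof -
  have "Rcheck N \<kappa> h a c = (\<Sum>b\<in>idx2 N. if b = (snd a, fst a) then Rra \<kappa> h b c else 0)"
    unfolding Rcheck_def mcomp_def flip_def by (rule sum.cong) auto
  also have "\<dots> = Rra \<kappa> h (snd a, fst a) c"
    using assms by (auto simp: idx2_def mem_Times_iff)
  finally show ?thesis .
qed

lemma row_poly_Rcheck:
  assumes "a \<in> idx2 N" and "h \<noteq> 0" and "X \<noteq> Y"
  shows "row_poly h g (idx2 N) (Rcheck N \<kappa> h) a X Y = swap_op \<kappa> (basis_poly h g a) X Y"
proof -
  define x y where "x = X - h - g/2" and "y = Y - g/2"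
  have coords: "X - Y = x - y + h" "X - g/2 = x + h" "Y - h - g/2 = y - h"
    by (simp_all add: x_def y_def)
  have "snd a < N" "fst a < N" using assms(1) by (auto simp: idx2_def)
  moreover have "x - y + h \<noteq> 0" unfolding coords(1)[symmetric] using assms(3) by simp
  ultimately have "(\<Sum>k<N. \<Sum>l<N. Rra \<kappa> h (snd a, fst a) (k,l) * x^k * y^l)
      = (x+h)^snd a * (y-h)^fst a + \<kappa> / (x - y + h) * ((x+h)^snd a * (y-h)^fst a - y^snd a * x^fst a)"
    by (rule Rra_row_poly[OF _ _ assms(2)])
  then show ?thesis
    unfolding row_poly_idx2 Rcheck_eq[OF assms(1)] swap_op_def basis_poly_def coords
      x_def[symmetric] y_def[symmetric]
    by (simp add: mult_ac)
qed

lemma row_poly_K2: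
  assumes "a \<in> idx2 N" and "Y \<noteq> 0"
  shows "row_poly h g (idx2 N) (K2 (Kra \<nu> g)) a X Y = sign_op \<nu> (basis_poly h g a X) Y"
proof -
  define x y where "x = X - h - g/2" and "y = Y - g/2"
  have "fst a < N" "snd a < N" using assms(1) by (auto simp: idx2_def)
  have "row_poly h g (idx2 N) (K2 (Kra \<nu> g)) a X Y
      = (\<Sum>k<N. if k = fst a then x^k * (\<Sum>l<N. Kra \<nu> g (snd a) l * y^l) else 0)"
    unfolding row_poly_idx2 K2_def x_def[symmetric] y_def[symmetric]
    by (rule sum.cong[OF refl]) (simp add: sum_distrib_left mult_ac)
  also have "\<dots> = x ^ fst a * (\<Sum>l<N. Kra \<nu> g (snd a) l * y^l)"
    using \<open>fst a < N\<close> by simp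
  also have "\<dots> = sign_op \<nu> (basis_poly h g a X) Y"
    unfolding y_def Kra_row_poly[OF \<open>snd a < N\<close> assms(2)]
    by (simp add: sign_op_def basis_poly_def x_def algebra_simps)
  finally show ?thesis .
qed

lemma row_poly_mcomp_Rcheck:
  assumes "h \<noteq> 0"
    and B: "\<And>p q. regular_point p q \<Longrightarrow> row_poly h g (idx2 N) B a p q = F p q"
    and "regular_point X Y"
  shows "row_poly h g (idx2 N) (mcomp (idx2 N) (Rcheck N \<kappa> h) B) a X Y = swap_op \<kappa> F X Y"
proof -
  have "X \<noteq> Y" and "regular_point Y X" using assms(3) by (auto simp: regular_point_def)
  have "row_poly h g (idx2 N) (mcomp (idx2 N) (Rcheck N \<kappa> h) B) a X Y
      = (\<Sum>m\<in>idx2 N. B a m * swap_op \<kappa> (basis_poly h g m) X Y)"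
    unfolding row_poly_mcomp[OF fin_idx2]
    by (rule sum.cong[OF refl]) (simp add: row_poly_Rcheck[OF _ assms(1) \<open>X \<noteq> Y\<close>])
  also have "\<dots> = swap_op \<kappa> (row_poly h g (idx2 N) B a) X Y"
    unfolding row_poly_def swap_op_sum ..
  also have "\<dots> = swap_op \<kappa> F X Y"
    using B[OF assms(3)] B[OF \<open>regular_point Y X\<close>] by (rule swap_op_cong)
  finally show ?thesis .
qed

lemma row_poly_mcomp_K2:
  assumes B: "\<And>p q. regular_point p q \<Longrightarrow> row_poly h g (idx2 N) B a p q = F p q"
    and "regular_point X Y"
  shows "row_poly h g (idx2 N) (mcomp (idx2 N) (K2 (Kra \<nu> g)) B) a X Y = sign_op \<nu> (F X) Y"
proof -
  have "Y \<noteq> 0" and "regular_point X (- Y)" using assms(2) by (auto simp: regular_point_def)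
  have "row_poly h g (idx2 N) (mcomp (idx2 N) (K2 (Kra \<nu> g)) B) a X Y
      = (\<Sum>m\<in>idx2 N. B a m * sign_op \<nu> (basis_poly h g m X) Y)"
    unfolding row_poly_mcomp[OF fin_idx2]
    by (rule sum.cong[OF refl]) (simp add: row_poly_K2[OF _ \<open>Y \<noteq> 0\<close>])
  also have "\<dots> = sign_op \<nu> (row_poly h g (idx2 N) B a X) Y"
    unfolding row_poly_def sign_op_sum ..
  also have "\<dots> = sign_op \<nu> (F X) Y"
    using B[OF assms(2)] B[OF \<open>regular_point X (- Y)\<close>] by (rule sign_op_cong)
  finally show ?thesis .
qed

lemma row_eq_if_row_poly_eq:
  assumes "\<And>X Y. regular_point X Y \<Longrightarrow> row_poly h g (idx2 N) M a X Y = row_poly h g (idx2 N) M' a X Y"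
    and "c \<in> idx2 N"
  shows "M a c = M' a c"
proof -
  obtain k l where c: "c = (k, l)" "k < N" "l < N" using assms(2) by (auto simp: idx2_def)
  have "(\<lambda>k l. M a (k,l) - M' a (k,l)) k l = 0"
  proof (rule coeff2_eq_zero_if_poly_vanishes_generically
      [where B = "{0}" and A = "\<lambda>Y. {0, Y, - Y}" and u = "h + g/2" and w = "g/2"])
    fix X Y :: complex assume "Y \<notin> {0}" and "X \<notin> {0, Y, - Y}"
    then have "regular_point X Y" by (auto simp: regular_point_def)
    from assms(1)[OF this]
    show "(\<Sum>k<N. \<Sum>l<N. (M a (k,l) - M' a (k,l)) * (X - (h + g/2))^k * (Y - g/2)^l) = 0"
      unfolding row_poly_idx2 by (simp add: left_diff_distrib sum_subtractf diff_diff_eq)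
  qed (use c in auto)
  then show ?thesis using c by simp
qed

lemma Kra_squared:
  assumes "j < N" and "k < N"
  shows "mcomp {0..<N} (Kra \<nu> g) (Kra \<nu> g) j k = idm j k"
proof -
  define \<phi> where "\<phi> m = (\<lambda>Y::complex. (Y - g/2)^m)" for m
  have row: "(\<Sum>k<N. Kra \<nu> g m k * \<phi> k Y) = sign_op \<nu> (\<phi> m) Y" if "m < N" and "Y \<noteq> 0" for m Y
    unfolding \<phi>_def using Kra_row_poly[OF that] by simp
  have "(\<lambda>k. mcomp {0..<N} (Kra \<nu> g) (Kra \<nu> g) j k - idm j k) k = 0"
  proof (rule coeff_eq_zero_if_poly_vanishes_cofinitely[where E = "{0}" and u = "g/2"])
    fix Y :: complex assume "Y \<notin> {0}"
    then have "Y \<noteq> 0" "- Y \<noteq> 0" by auto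
    have "(\<Sum>k<N. mcomp {0..<N} (Kra \<nu> g) (Kra \<nu> g) j k * \<phi> k Y)
        = (\<Sum>m<N. Kra \<nu> g j m * (\<Sum>k<N. Kra \<nu> g m k * \<phi> k Y))"
      unfolding mcomp_def atLeast0LessThan
      by (simp add: sum_distrib_left sum_distrib_right mult.assoc) (rule sum.swap)
    also have "\<dots> = (\<Sum>m<N. Kra \<nu> g j m * sign_op \<nu> (\<phi> m) Y)"
      using row \<open>Y \<noteq> 0\<close> by simp
    also have "\<dots> = sign_op \<nu> (\<lambda>Y. \<Sum>m<N. Kra \<nu> g j m * \<phi> m Y) Y"
      by (rule sign_op_sum[symmetric])
    also have "\<dots> = sign_op \<nu> (sign_op \<nu> (\<phi> j)) Y"
      by (rule sign_op_cong) (use row assms(1) \<open>Y \<noteq> 0\<close> \<open>- Y \<noteq> 0\<close> in auto)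
    also have "\<dots> = \<phi> j Y" by (rule sign_op_involutive)
    also have "\<dots> = (\<Sum>k<N. idm j k * \<phi> k Y)"
    proof -
      have "(\<Sum>k<N. idm j k * \<phi> k Y) = (\<Sum>k<N. if j = k then \<phi> k Y else 0)"
        by (rule sum.cong) (auto simp: idm_def)
      then show ?thesis using assms(1) by simp
    qed
    finally show "(\<Sum>k<N. (mcomp {0..<N} (Kra \<nu> g) (Kra \<nu> g) j k - idm j k) * (Y - g/2)^k) = 0"
      by (simp add: \<phi>_def left_diff_distrib sum_subtractf)
  qed (use assms(2) in auto)
  then show ?thesis by simp
qed

lemma reflection_equation_entries:
  assumes "h \<noteq> 0" and "a \<in> idx2 N" and "b \<in> idx2 N"
  shows "mcomp (idx2 N) (Rcheck N \<kappa> h)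
           (mcomp (idx2 N) (K2 (Kra \<nu> g)) (mcomp (idx2 N) (Rcheck N \<kappa> h) (K2 (Kra \<nu> g)))) a b
       = mcomp (idx2 N) (K2 (Kra \<nu> g))
           (mcomp (idx2 N) (Rcheck N \<kappa> h) (mcomp (idx2 N) (K2 (Kra \<nu> g)) (Rcheck N \<kappa> h))) a b"
proof (rule row_eq_if_row_poly_eq[OF _ assms(3)])
  fix X Y assume XY: "regular_point X Y"
  let ?K = "K2 (Kra \<nu> g)" and ?R = "Rcheck N \<kappa> h" and ?e = "basis_poly h g a"
  have K: "row_poly h g (idx2 N) ?K a p q = sign_op \<nu> (?e p) q" if "regular_point p q" for p q
    using that by (intro row_poly_K2[OF assms(2)]) (simp add: regular_point_def)
  have R: "row_poly h g (idx2 N) ?R a p q = swap_op \<kappa> ?e p q" if "regular_point p q" for p q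
    using that by (intro row_poly_Rcheck[OF assms(2,1)]) (simp add: regular_point_def)
  have "row_poly h g (idx2 N) (mcomp (idx2 N) ?R ?K) a p q = swap_op \<kappa> (\<lambda>X. sign_op \<nu> (?e X)) p q"
    if "regular_point p q" for p q
    by (rule row_poly_mcomp_Rcheck[OF assms(1) K that])
  then have "row_poly h g (idx2 N) (mcomp (idx2 N) ?K (mcomp (idx2 N) ?R ?K)) a p q
      = sign_op \<nu> (swap_op \<kappa> (\<lambda>X. sign_op \<nu> (?e X)) p) q"
    if "regular_point p q" for p q
    by (rule row_poly_mcomp_K2[OF _ that])
  then have left: "row_poly h g (idx2 N) (mcomp (idx2 N) ?R (mcomp (idx2 N) ?K (mcomp (idx2 N) ?R ?K))) a X Y
      = swap_op \<kappa> (\<lambda>X. sign_op \<nu> (swap_op \<kappa> (\<lambda>X. sign_op \<nu> (?e X)) X)) X Y"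
    by (rule row_poly_mcomp_Rcheck[OF assms(1) _ XY])
  have "row_poly h g (idx2 N) (mcomp (idx2 N) ?K ?R) a p q = sign_op \<nu> (swap_op \<kappa> ?e p) q"
    if "regular_point p q" for p q
    by (rule row_poly_mcomp_K2[OF R that])
  then have "row_poly h g (idx2 N) (mcomp (idx2 N) ?R (mcomp (idx2 N) ?K ?R)) a p q
      = swap_op \<kappa> (\<lambda>X. sign_op \<nu> (swap_op \<kappa> ?e X)) p q"
    if "regular_point p q" for p q
    by (rule row_poly_mcomp_Rcheck[OF assms(1) _ that])
  then have right: "row_poly h g (idx2 N) (mcomp (idx2 N) ?K (mcomp (idx2 N) ?R (mcomp (idx2 N) ?K ?R))) a X Y
      = sign_op \<nu> (swap_op \<kappa> (\<lambda>X. sign_op \<nu> (swap_op \<kappa> ?e X)) X) Y"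
    by (rule row_poly_mcomp_K2[OF _ XY])
  show "row_poly h g (idx2 N) (mcomp (idx2 N) ?R (mcomp (idx2 N) ?K (mcomp (idx2 N) ?R ?K))) a X Y
      = row_poly h g (idx2 N) (mcomp (idx2 N) ?K (mcomp (idx2 N) ?R (mcomp (idx2 N) ?K ?R))) a X Y"
    unfolding left right
    by (rule reflection_equation_ops) (use XY in \<open>simp_all add: regular_point_def\<close>)
qed

theorem mainTheorem10:
  fixes N :: nat and \<kappa> h \<nu> g :: complex
  assumes "N \<ge> 1" and "h \<noteq> 0"
  shows "(\<forall>j<N. \<forall>k<N. mcomp {0..<N} (Kra \<nu> g) (Kra \<nu> g) j k = idm j k) \<and>
         (\<forall>a\<in>idx2 N. \<forall>b\<in>idx2 N.
            mcomp (idx2 N) (Rcheck N \<kappa> h)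
              (mcomp (idx2 N) (K2 (Kra \<nu> g))
                (mcomp (idx2 N) (Rcheck N \<kappa> h) (K2 (Kra \<nu> g)))) a b
          = mcomp (idx2 N) (K2 (Kra \<nu> g))
              (mcomp (idx2 N) (Rcheck N \<kappa> h)
                (mcomp (idx2 N) (K2 (Kra \<nu> g)) (Rcheck N \<kappa> h))) a b)"
  using Kra_squared reflection_equation_entries[OF assms(2)] by blast

end
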